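(* Let $\beta\ge2$ and let $T\ge\beta$ be an even integer. Define the two LDSs on $\mathbb{R}$ (state and control in $\mathbb{R}$) $\mathcal{L}^0:=(1,-\beta/T,x_1,(w_t^0)_t,(c_t)_t)$ and $\mathcal{L}^1:=(1,-\beta/T,x_1,(w_t^1)_t,(c_t)_t)$, i.e. with dynamics $x_{t+1}=x_t-\frac\beta Tu_t+w_t^b$ for $b\in\{0,1\}$, where $x_1=1$, $c_t(x,u):=|x|+|u|$ if $t>T/2$ and $c_t(x,u):=0$ otherwise, $w_t^0:=0$ for all $t$, and $w_t^1:=-1$ if $t=T/2$ and $w_t^1:=0$ otherwise. Define $\pi^0(x):=x$ and $\pi^1(x):=0$. Then: (i) $\pi^0\in\mathcal{K}_1(\mathcal{L}^0)$, and the iterates $(x_t,u_t)_{t=1}^T$ produced by following $\pi^0$ in $\mathcal{L}^0$ satisfy $\sum_{t=1}^Tc_t(x_t,u_t)\le\frac{2T}{\beta}e^{-\beta/2}$; (ii) $\pi^1\in\mathcal{K}_1(\mathcal{L}^1)$, and the iterates produced by following $\pi^1$ in $\mathcal{L}^1$ satisfy $\sum_{t=1}^Tc_t(x_t,u_t)=0$.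
   Context: An LDS $(A,B,x_1,(w_t),(c_t))$ evolves as $x_{t+1}=Ax_t+Bu_t+w_t$ with cost $c_t(x_t,u_t)$ at time $t$. A matrix $M$ is $\kappa$-marginally stable if there is $H$ with $\|H^{-1}MH\|\le1$ and $\|M\|,\|H\|,\|H^{-1}\|\le\kappa$. $\mathcal{K}_\kappa(\mathcal{L})$ is the set of linear time-invariant policies $x\mapsto Kx$ such that $A+BK$ is $\kappa$-marginally stable. *)

theory Defs
  imports Complex_Main
begin

text \<open>Scalar (one-dimensional) linear dynamical systems: state and control in real.
  Matrices are 1x1, i.e. reals, and the operator norm is the absolute value.\<close>

definition marginally_stable :: "real \<Rightarrow> real \<Rightarrow> bool" where
  "marginally_stable \<kappa> M \<longleftrightarrow>
     (\<exists>H::real. H \<noteq> 0 \<and> \<bar>inverse H * M * H\<bar> \<le> 1 \<and>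
        \<bar>M\<bar> \<le> \<kappa> \<and> \<bar>H\<bar> \<le> \<kappa> \<and> \<bar>inverse H\<bar> \<le> \<kappa>)"

definition in_K :: "real \<Rightarrow> real \<Rightarrow> real \<Rightarrow> (real \<Rightarrow> real) \<Rightarrow> bool" where
  "in_K \<kappa> A B \<pi> \<longleftrightarrow> (\<exists>K::real. \<pi> = (\<lambda>x. K * x) \<and> marginally_stable \<kappa> (A + B * K))"

text \<open>State trajectory x_t (t \<ge> 1) of the LDS (A,B,x1,w) when following policy pi:
  x_1 = x1, x_{t+1} = A x_t + B u_t + w_t with u_t = pi x_t. Index 0 is unused.\<close>
fun lds_state :: "real \<Rightarrow> real \<Rightarrow> real \<Rightarrow> (nat \<Rightarrow> real) \<Rightarrow> (real \<Rightarrow> real) \<Rightarrow> nat \<Rightarrow> real" where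
  "lds_state A B x1 w \<pi> 0 = x1"
| "lds_state A B x1 w \<pi> (Suc 0) = x1"
| "lds_state A B x1 w \<pi> (Suc (Suc t)) =
     A * lds_state A B x1 w \<pi> (Suc t) + B * \<pi> (lds_state A B x1 w \<pi> (Suc t)) + w (Suc t)"

definition lds_control :: "real \<Rightarrow> real \<Rightarrow> real \<Rightarrow> (nat \<Rightarrow> real) \<Rightarrow> (real \<Rightarrow> real) \<Rightarrow> nat \<Rightarrow> real" where
  "lds_control A B x1 w \<pi> t = \<pi> (lds_state A B x1 w \<pi> t)"

end

theory Submission
  imports Defs
begin

text \<open>Both policies are linear with closed-loop gain of modulus at most one, witnessed by
  \<open>H = 1\<close>. Under \<open>\<pi>0\<close> without noise the state decays geometrically with ratio
  \<open>a = 1 - \<beta>/T\<close>, so the cost of the second half is twice a geometric tail, at most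
  \<open>2 a^(T/2) T/\<beta>\<close>, and \<open>a^(T/2) = (1 - (\<beta>/2)/(T/2))^(T/2) \<le> exp (-\<beta>/2)\<close>.
  Under \<open>\<pi>1\<close> the state only accumulates the noise, and the single impulse \<open>-1\<close> at time
  \<open>T/2\<close> drives it from \<open>1\<close> to \<open>0\<close> before any cost is charged.\<close>

lemma marginally_stable_if_abs_le_1:
  assumes "1 \<le> \<kappa>" and "\<bar>M\<bar> \<le> 1"
  shows "marginally_stable \<kappa> M"
  unfolding marginally_stable_def using assms by (intro exI[of _ 1]) auto

lemma in_K_linear_if_abs_le_1:
  assumes "1 \<le> \<kappa>" and "\<bar>A + B * K\<bar> \<le> 1"
  shows "in_K \<kappa> A B (\<lambda>x. K * x)"
  unfolding in_K_def using assms by (auto intro: marginally_stable_if_abs_le_1)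

lemma lds_state_linear_noiseless:
  "lds_state A B x1 (\<lambda>_. 0) (\<lambda>x. K * x) (Suc n) = (A + B * K) ^ n * x1"
  by (induction n) (auto simp: algebra_simps)

lemma lds_state_zero_policy:
  "lds_state 1 B x1 w (\<lambda>_. 0) (Suc n) = x1 + (\<Sum>s=1..n. w s)"
  by (induction n) auto

lemma lds_state_zero_policy_after_impulse:
  assumes "0 < m" and "m < t"
  shows "lds_state 1 B 1 (\<lambda>s. if s = m then -1 else 0) (\<lambda>_. 0) t = 0"
proof -
  obtain n where "t = Suc n" and "m \<in> {1..n}" using assms by (cases t) auto
  then show ?thesis by (simp add: lds_state_zero_policy)
qed

lemma sum_if_less_eq_sum_shifted:
  fixes f :: "nat \<Rightarrow> 'a::comm_monoid_add"
  shows "(\<Sum>t=1..n. if m < t then f t else 0) = (\<Sum>i=m..<n. f (Suc i))"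
proof -
  have "{t \<in> {1..n}. m < t} = {Suc m..<Suc n}" by auto
  then have "(\<Sum>t=1..n. if m < t then f t else 0) = (\<Sum>t=Suc m..<Suc n. f t)"
    by (metis (no_types) finite_atLeastAtMost sum.inter_filter)
  then show ?thesis by (simp only: sum.shift_bounds_Suc_ivl)
qed

lemma geometric_sum_le:
  fixes a :: real
  assumes "0 \<le> a" and "a < 1"
  shows "(\<Sum>i=m..<n. a ^ i) \<le> a ^ m / (1 - a)"
proof (cases "m < n")
  case True
  then have "(1 - a) * (\<Sum>i=m..<n. a ^ i) = a ^ m - a ^ n"
    using sum_gp_multiplied[of m "n - 1" a] by (simp add: atLeastLessThanSuc_atLeastAtMost[symmetric])
  then have "(\<Sum>i=m..<n. a ^ i) * (1 - a) \<le> a ^ m"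
    using assms by (simp add: mult.commute)
  then show ?thesis using assms by (simp add: pos_le_divide_eq)
next
  case False
  then show ?thesis using assms by simp
qed

lemma damped_geometric_sum_le_exp:
  fixes \<beta> :: real
  assumes "0 < \<beta>" and "\<beta> \<le> 2 * m"
  shows "(\<Sum>i=m..<2*m. (1 - \<beta> / (2 * m)) ^ i) \<le> 2 * m / \<beta> * exp (-\<beta>/2)"
proof -
  let ?a = "1 - \<beta> / (2 * m)"
  have "0 < m" using assms by auto
  have "(\<Sum>i=m..<2*m. ?a ^ i) \<le> ?a ^ m / (\<beta> / (2 * m))"
    using geometric_sum_le[of ?a m "2 * m"] assms \<open>0 < m\<close> by simp
  also have "\<dots> = 2 * m / \<beta> * ?a ^ m" by simp
  also have "\<dots> \<le> 2 * m / \<beta> * exp (-\<beta>/2)"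
  proof (rule mult_left_mono)
    show "?a ^ m \<le> exp (-\<beta>/2)"
      using exp_ge_one_minus_x_over_n_power_n[of "\<beta>/2" m] assms \<open>0 < m\<close> by simp
  qed (use assms in simp)
  finally show ?thesis by simp
qed

theorem lemma10:
  fixes \<beta> :: real and T :: nat
    and c :: "nat \<Rightarrow> real \<Rightarrow> real \<Rightarrow> real"
    and w0 w1 :: "nat \<Rightarrow> real" and \<pi>0 \<pi>1 :: "real \<Rightarrow> real"
  assumes "\<beta> \<ge> 2" and "real T \<ge> \<beta>" and "even T"
    and "\<And>t x u. c t x u = (if real t > real T / 2 then \<bar>x\<bar> + \<bar>u\<bar> else 0)"
    and "\<And>t. w0 t = 0"
    and "\<And>t. w1 t = (if real t = real T / 2 then -1 else 0)"
    and "\<And>x. \<pi>0 x = x" and "\<And>x. \<pi>1 x = 0"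
  shows "(in_K 1 1 (-\<beta>/T) \<pi>0 \<and>
          (\<Sum>t=1..T. c t (lds_state 1 (-\<beta>/T) 1 w0 \<pi>0 t) (lds_control 1 (-\<beta>/T) 1 w0 \<pi>0 t))
            \<le> 2 * T / \<beta> * exp (-\<beta>/2))
       \<and> (in_K 1 1 (-\<beta>/T) \<pi>1 \<and>
          (\<Sum>t=1..T. c t (lds_state 1 (-\<beta>/T) 1 w1 \<pi>1 t) (lds_control 1 (-\<beta>/T) 1 w1 \<pi>1 t)) = 0)"
proof -
  obtain m where T: "T = 2 * m" using assms(3) by blast
  then have half_T: "real T / 2 = real m" by simp
  have "0 < \<beta> / T" "\<beta> / T \<le> 1" using assms(1,2) by auto
  have \<pi>0: "\<pi>0 = (\<lambda>x. 1 * x)" and w0: "w0 = (\<lambda>_. 0)" using assms(5,7) by auto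
  have \<pi>1: "\<pi>1 = (\<lambda>x. 0 * x)" and w1: "w1 = (\<lambda>s. if s = m then -1 else 0)"
    using assms(6,8) half_T by auto
  have cost: "(\<Sum>t=1..T. c t (lds_state 1 (-\<beta>/T) 1 w \<pi> t) (lds_control 1 (-\<beta>/T) 1 w \<pi> t))
      = (\<Sum>i=m..<T. \<bar>lds_state 1 (-\<beta>/T) 1 w \<pi> (Suc i)\<bar> + \<bar>\<pi> (lds_state 1 (-\<beta>/T) 1 w \<pi> (Suc i))\<bar>)"
    for w \<pi> by (simp only: assms(4) half_T lds_control_def of_nat_less_iff sum_if_less_eq_sum_shifted)
  have "in_K 1 1 (-\<beta>/T) \<pi>0" "in_K 1 1 (-\<beta>/T) \<pi>1"
    unfolding \<pi>0 \<pi>1 using \<open>0 < \<beta> / T\<close> \<open>\<beta> / T \<le> 1\<close> by (auto intro: in_K_linear_if_abs_le_1)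
  moreover have "(\<Sum>t=1..T. c t (lds_state 1 (-\<beta>/T) 1 w0 \<pi>0 t) (lds_control 1 (-\<beta>/T) 1 w0 \<pi>0 t))
      = 2 * (\<Sum>i=m..<T. (1 - \<beta> / T) ^ i)"
    unfolding cost \<pi>0 w0 lds_state_linear_noiseless using \<open>\<beta> / T \<le> 1\<close> by (simp add: sum_distrib_left)
  moreover have "(\<Sum>i=m..<T. (1 - \<beta> / T) ^ i) \<le> T / \<beta> * exp (-\<beta>/2)"
    using damped_geometric_sum_le_exp[of \<beta> m] assms(1,2) by (simp add: T)
  moreover have "(\<Sum>t=1..T. c t (lds_state 1 (-\<beta>/T) 1 w1 \<pi>1 t) (lds_control 1 (-\<beta>/T) 1 w1 \<pi>1 t)) = 0"
    unfolding cost using half_T by (simp add: \<pi>1 w1 lds_state_zero_policy_after_impulse)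
  ultimately show ?thesis by simp
qed

end
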